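(* Let $n$ be an even number and $r$ an integer with $0\le r\le n$. Then the tensor $g^{(\alpha_1\alpha_2}\cdots g^{\alpha_{n-1}\alpha_n)}\mu_{\alpha_{n-r+1}}\cdots\mu_{\alpha_n}$ (a function of $\mu_\beta$ with free indices $\alpha_1,\dots,\alpha_{n-r}$) belongs to $\mathcal F$ and $$g^{(\alpha_1\alpha_2}\cdots g^{\alpha_{n-1}\alpha_n)}\mu_{\alpha_{n-r+1}}\cdots\mu_{\alpha_n}=\sum_{s=0}^{[\frac{n-r}{2}]}\phi^{n-r}_{s,r}\,g^{(\alpha_1\alpha_2}\cdots g^{\alpha_{2s-1}\alpha_{2s}}\mu^{\alpha_{2s+1}}\cdots\mu^{\alpha_{n-r})},$$ with $$\phi^{n-r}_{s,r}=\begin{cases}1 & \text{for } r\le1,\ s=[\frac{n-r}{2}],\\ 0 & \text{for } r\le1,\ 0\le s\le[\frac{n-r}{2}]-1,\\ \dfrac{r!\,(n-r)!}{(2s+2r-n)!!\,(2s)!!\,(n-r-2s)!\,(n-1)!!}(-\gamma^2)^{s+r-\frac n2} & \text{for } r\ge2,\ \frac n2-r\le s\le[\frac{n-r}{2}],\\ 0 & \text{for } r\ge2,\ 0\le s\le\frac n2-r-1.\end{cases}$$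
   Context: Work in 4-dimensional Minkowski space with metric $g_{\alpha\beta}$ of signature $(-,+,+,+)$; indices are raised and lowered with $g$ and repeated indices are summed. $\lambda$ is a real scalar, $\mu_\beta$ is a time-like covector and $\gamma=\sqrt{-\mu^\alpha\mu_\alpha}>0$. Round brackets around indices denote normalized total symmetrization; $[x]$ denotes the integer part of $x$. The family $\mathcal F$ consists of the (smooth) Lorentz-covariant (isotropic) tensor-valued functions $\phi^{\alpha_1\cdots\alpha_n}(\lambda,\mu_\beta)$ which are totally symmetric in their indices and whose derivative $\partial\phi^{\alpha_1\cdots\alpha_n}/\partial\mu_\beta$ is totally symmetric in $\alpha_1,\dots,\alpha_n,\beta$. *)

theory Defs
  imports "HOL-Analysis.Analysis"
begin

text \<open>Indices range over the type 4 (values 0,1,2,3; 0 is the time index).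
  Covectors mu are elements of real^4 with components mu $ b = mu_b.
  A rank-k tensor is a function on index lists of length k.\<close>

definition gm :: "4 \<Rightarrow> 4 \<Rightarrow> real" where
  "gm a b = (if a = b then (if a = 0 then -1 else 1) else 0)"

definition raise :: "real^4 \<Rightarrow> 4 \<Rightarrow> real" where
  "raise mu a = (\<Sum>b\<in>UNIV. gm a b * mu $ b)"

definition mdot :: "real^4 \<Rightarrow> real" where
  "mdot mu = (\<Sum>a\<in>UNIV. raise mu a * mu $ a)"

definition timelike :: "real^4 \<Rightarrow> bool" where
  "timelike mu \<longleftrightarrow> mdot mu < 0"

definition gam :: "real^4 \<Rightarrow> real" where
  "gam mu = sqrt (- mdot mu)"

definition symm :: "(4 list \<Rightarrow> real) \<Rightarrow> 4 list \<Rightarrow> real" where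
  "symm T xs = (\<Sum>p\<in>{p. p permutes {..<length xs}}.
      T (map (\<lambda>i. xs ! p i) [0..<length xs])) / fact (length xs)"

definition tsym :: "nat \<Rightarrow> (4 list \<Rightarrow> real) \<Rightarrow> bool" where
  "tsym k T \<longleftrightarrow> (\<forall>xs p. length xs = k \<longrightarrow> p permutes {..<k} \<longrightarrow>
      T (map (\<lambda>i. xs ! p i) [0..<k]) = T xs)"

fun Ck :: "nat \<Rightarrow> 'a::euclidean_space set \<Rightarrow> ('a \<Rightarrow> real) \<Rightarrow> bool" where
  "Ck 0 U f = continuous_on U f"
| "Ck (Suc n) U f = ((\<forall>x\<in>U. f differentiable (at x)) \<and>
      (\<forall>i\<in>Basis. Ck n U (\<lambda>x. frechet_derivative f (at x) i)))"

definition smooth_on :: "'a::euclidean_space set \<Rightarrow> ('a \<Rightarrow> real) \<Rightarrow> bool" where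
  "smooth_on U f \<longleftrightarrow> (\<forall>k. Ck k U f)"

definition dmu :: "(real \<Rightarrow> real^4 \<Rightarrow> 4 list \<Rightarrow> real) \<Rightarrow> real \<Rightarrow> real^4 \<Rightarrow> 4 list \<Rightarrow> 4 \<Rightarrow> real" where
  "dmu phi lam mu A b =
     frechet_derivative (\<lambda>p::real \<times> (real^4). phi (fst p) (snd p) A) (at (lam, mu)) (0, axis b 1)"

text \<open>Lorentz transformations L (L $ a $ b = L^a_b), full group O(1,3)\<close>
definition lorentz :: "real^4^4 \<Rightarrow> bool" where
  "lorentz L \<longleftrightarrow> (\<forall>c d. (\<Sum>a\<in>UNIV. \<Sum>b\<in>UNIV. gm a b * L $ a $ c * L $ b $ d) = gm c d)"

definition cov_act :: "real^4 \<Rightarrow> real^4^4 \<Rightarrow> real^4" where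
  "cov_act mu L = (\<chi> b. \<Sum>a\<in>UNIV. mu $ a * L $ a $ b)"

text \<open>Lorentz covariance of a rank-k contravariant tensor function:
  phi^A(lam, mu) = L^{a1}_{b1} ... L^{ak}_{bk} phi^B(lam, mu L), equivalently
  phi(lam, mu L^{-1}) = L...L phi(lam, mu).\<close>
definition covariant :: "nat \<Rightarrow> (real \<Rightarrow> real^4 \<Rightarrow> 4 list \<Rightarrow> real) \<Rightarrow> bool" where
  "covariant k phi \<longleftrightarrow> (\<forall>L lam mu A. lorentz L \<longrightarrow> timelike mu \<longrightarrow> length A = k \<longrightarrow>
     phi lam mu A = (\<Sum>B\<in>{B::4 list. length B = k}.
        (\<Prod>i<k. L $ (A ! i) $ (B ! i)) * phi lam (cov_act mu L) B))"

definition in_F :: "nat \<Rightarrow> (real \<Rightarrow> real^4 \<Rightarrow> 4 list \<Rightarrow> real) \<Rightarrow> bool" where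
  "in_F k phi \<longleftrightarrow>
     (\<forall>A. length A = k \<longrightarrow>
         smooth_on (UNIV \<times> {mu. timelike mu}) (\<lambda>p. phi (fst p) (snd p) A))
   \<and> (\<forall>lam mu. timelike mu \<longrightarrow> tsym k (phi lam mu))
   \<and> (\<forall>lam mu. timelike mu \<longrightarrow> tsym (Suc k) (\<lambda>xs. dmu phi lam mu (butlast xs) (last xs)))
   \<and> covariant k phi"

definition gprod :: "nat \<Rightarrow> 4 list \<Rightarrow> real" where
  "gprod m xs = (\<Prod>i<m. gm (xs ! (2 * i)) (xs ! (2 * i+1)))"

definition lhsT :: "nat \<Rightarrow> nat \<Rightarrow> real^4 \<Rightarrow> 4 list \<Rightarrow> real" where
  "lhsT n r mu A = (\<Sum>C\<in>{C::4 list. length C = r}.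
      symm (gprod (n div 2)) (A @ C) * (\<Prod>j<r. mu $ (C ! j)))"

definition gmuT :: "nat \<Rightarrow> real^4 \<Rightarrow> 4 list \<Rightarrow> real" where
  "gmuT s mu xs = gprod s xs * (\<Prod>j\<in>{2 * s ..< length xs}. raise mu (xs ! j))"

fun dfact :: "nat \<Rightarrow> nat" where
  "dfact 0 = 1"
| "dfact (Suc 0) = 1"
| "dfact (Suc (Suc n)) = Suc (Suc n) * dfact n"

definition phicoef :: "nat \<Rightarrow> nat \<Rightarrow> nat \<Rightarrow> real \<Rightarrow> real" where
  "phicoef n r s g =
    (if r \<le> 1 then (if s = (n - r) div 2 then 1 else 0)
     else if n div 2 \<le> s + r then
       fact r * fact (n - r) /
         (real (dfact (2 * s + 2 * r - n)) * real (dfact (2 * s)) * fact (n - r - 2 * s) * real (dfact (n - 1)))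
         * (- (g^2)) ^ (s + r - n div 2)
     else 0)"

end

(*
  The tensor with r contracted covectors arises from the one with r - 1 by contracting one more
  free index with mu, so the expansion is proved by induction on r. The key computation contracts
  the symmetrization G_s of g ... g mu ... mu (s metric factors, k + 1 slots) with mu in its last
  slot: of the k + 1 positions that slot takes under symmetrization, the 2 s inside a metric factor
  turn g^{ab} mu_b into mu^a and give G_{s-1}, the other k + 1 - 2 s give mu^a mu_a = -gamma^2
  times G_s. Hence the coefficients obey a two-term recursion in r, which the closed formula solves.

  Membership in F: the tensor is a polynomial in mu, hence smooth; its mu-derivative is r times the
  tensor with r - 1 contractions and one more free index, hence symmetric; and it is covariant
  because Lorentz transformations preserve g and commute with symmetrization.
*)
theory Submission
  imports Defs
begin

lemma finite_lists_length: "finite {xs::'a::finite list. length xs = k}"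
  using finite_lists_length_eq[of "UNIV::'a set" k] by simp

lemma sum_lists_length_Suc:
  "(\<Sum>xs\<in>{xs::'a::finite list. length xs = Suc k}. f xs)
     = (\<Sum>x\<in>UNIV. \<Sum>xs\<in>{xs. length xs = k}. f (x # xs))"
proof -
  have bij: "bij_betw (\<lambda>(x, xs). x # xs) (UNIV \<times> {xs::'a list. length xs = k})
               {xs. length xs = Suc k}"
    by (rule bij_betw_byWitness[where f'="\<lambda>xs. (hd xs, tl xs)"])
       (auto simp: length_Suc_conv)
  show ?thesis
    by (simp add: sum.reindex_bij_betw[OF bij, symmetric] sum.cartesian_product case_prod_beta)
qed

lemma sum_lists_length_add:
  "(\<Sum>xs\<in>{xs::'a::finite list. length xs = k + r}. f xs)
     = (\<Sum>ys\<in>{ys. length ys = k}. \<Sum>zs\<in>{zs. length zs = r}. f (ys @ zs))"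
  by (induction k arbitrary: f) (simp_all add: sum_lists_length_Suc)

lemma prod_sum_lists_length:
  fixes f :: "nat \<Rightarrow> 'a::finite \<Rightarrow> 'b::comm_semiring_1"
  shows "(\<Prod>j<r. \<Sum>x\<in>UNIV. f j x) = (\<Sum>xs\<in>{xs::'a list. length xs = r}. \<Prod>j<r. f j (xs ! j))"
proof (induction r arbitrary: f)
  case 0
  then show ?case by simp
next
  case (Suc r)
  have "(\<Prod>j<Suc r. \<Sum>x\<in>UNIV. f j x) = (\<Sum>x\<in>UNIV. f 0 x) * (\<Prod>j<r. \<Sum>x\<in>UNIV. f (Suc j) x)"
    by (rule prod.lessThan_Suc_shift)
  also have "\<dots> = (\<Sum>x\<in>UNIV. \<Sum>xs\<in>{xs::'a list. length xs = r}. \<Prod>j<Suc r. f j ((x # xs) ! j))"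
    by (simp only: Suc.IH prod.lessThan_Suc_shift sum_product nth_Cons_0 nth_Cons_Suc)
  finally show ?case
    by (simp only: sum_lists_length_Suc)
qed

lemma prod_lessThan_add: "(\<Prod>i<k + r. f i) = (\<Prod>i<k. f i) * (\<Prod>j<r. f (k + j :: nat))"
  by (induction r) (simp_all add: mult_ac)

lemma sum_atMost_shift_pred:
  fixes b G :: "nat \<Rightarrow> 'a::semiring_0"
  assumes "b 0 = 0" "b (Suc n) = 0"
  shows "(\<Sum>s\<le>n. b s * G (s - 1)) = (\<Sum>s\<le>n. b (Suc s) * G s)"
proof -
  have "(\<Sum>s\<le>n. b s * G (s - 1)) = (\<Sum>s\<le>Suc n. b s * G (s - 1))"
    using assms(2) by simp
  also have "\<dots> = (\<Sum>s\<le>n. b (Suc s) * G s)"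
    using assms(1) by (subst sum.atMost_Suc_shift) simp
  finally show ?thesis .
qed

lemma length_ge_2_Cons_Cons: "2 \<le> length xs \<Longrightarrow> \<exists>x y ys. xs = x # y # ys"
  by (cases xs; cases "tl xs") auto

lemma permute_list_append_fixed:
  assumes "p permutes {..<length xs}"
  shows "permute_list p (xs @ ys) = permute_list p xs @ ys"
  using permutes_in_image[OF assms] permutes_not_in[OF assms]
  by (intro nth_equalityI) (auto simp: permute_list_def nth_append)

lemma permute_list_transpose_Suc_Cons:
  "permute_list (Transposition.transpose (Suc a) (Suc b)) (x # xs)
    = x # permute_list (Transposition.transpose a b) xs"
proof (rule nth_equalityI)
  fix i assume "i < length (permute_list (Transposition.transpose (Suc a) (Suc b)) (x # xs))"
  then show "permute_list (Transposition.transpose (Suc a) (Suc b)) (x # xs) ! i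
      = (x # permute_list (Transposition.transpose a b) xs) ! i"
    by (cases i) (auto simp: permute_list_def Transposition.transpose_def simp del: upt_Suc)
qed simp

lemma permute_list_transpose_0_2:
  "permute_list (Transposition.transpose 0 2) (x # y # z # xs) = z # y # x # xs"
  by (intro nth_equalityI)
     (auto simp: permute_list_def Transposition.transpose_def nth_Cons' simp del: upt_Suc)

definition insert_at :: "nat \<Rightarrow> 'a \<Rightarrow> 'a list \<Rightarrow> 'a list" where
  "insert_at j x xs = take j xs @ x # drop j xs"

lemma insert_at_0 [simp]: "insert_at 0 x xs = x # xs"
  by (simp add: insert_at_def)

lemma insert_at_Suc_Cons [simp]: "insert_at (Suc j) x (y # xs) = y # insert_at j x xs"
  by (simp add: insert_at_def)

definition insert_perm :: "nat \<Rightarrow> nat \<Rightarrow> nat \<Rightarrow> nat" where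
  "insert_perm k j i = (if i < j then i else if i = j then k else if i \<le> k then i - 1 else i)"

definition insert_perm_inv :: "nat \<Rightarrow> nat \<Rightarrow> nat \<Rightarrow> nat" where
  "insert_perm_inv k j i = (if i < j then i else if i = k then j else if i < k then i + 1 else i)"

lemma insert_perm_inv_inverse: "j \<le> k \<Longrightarrow> insert_perm k j (insert_perm_inv k j i) = i"
  by (auto simp: insert_perm_def insert_perm_inv_def)

lemma insert_perm_inverse: "j \<le> k \<Longrightarrow> insert_perm_inv k j (insert_perm k j i) = i"
  by (auto simp: insert_perm_def insert_perm_inv_def)

lemma insert_perm_permutes: "j \<le> k \<Longrightarrow> insert_perm k j permutes {..<Suc k}"
  by (intro bij_imp_permutes bij_betw_byWitness[where f'="insert_perm_inv k j"])
     (auto simp: insert_perm_inverse insert_perm_inv_inverse,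
      auto simp: insert_perm_def insert_perm_inv_def)

lemma insert_perm_inv_permutes: "j \<le> k \<Longrightarrow> insert_perm_inv k j permutes {..<Suc k}"
  by (intro bij_imp_permutes bij_betw_byWitness[where f'="insert_perm k j"])
     (auto simp: insert_perm_inverse insert_perm_inv_inverse,
      auto simp: insert_perm_def insert_perm_inv_def)

lemma permute_list_insert_perm:
  assumes "length xs = k" "j \<le> k"
  shows "permute_list (insert_perm k j) (xs @ [x]) = insert_at j x xs"
proof (rule nth_equalityI)
  fix i assume "i < length (permute_list (insert_perm k j) (xs @ [x]))"
  then show "permute_list (insert_perm k j) (xs @ [x]) ! i = insert_at j x xs ! i"
    using assms insert_perm_permutes[OF assms(2)]
    by (auto simp: permute_list_nth insert_at_def insert_perm_def nth_append min_def)
qed (use assms in \<open>simp add: insert_at_def\<close>)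

lemma bij_betw_permutes_insert_perm:
  "bij_betw (\<lambda>(j, q). q \<circ> insert_perm k j) ({..k} \<times> {q. q permutes {..<k}})
     {p. p permutes {..<Suc k}}"
proof -
  have compose_permutes: "q \<circ> insert_perm k j permutes {..<Suc k}"
    if "j \<le> k" "q permutes {..<k}" for j q
    using permutes_compose[OF insert_perm_permutes[OF that(1)] permutes_subset[OF that(2)]] by auto
  have inv_at_k: "inv (q \<circ> insert_perm k j) k = j" if "j \<le> k" "q permutes {..<k}" for j q
  proof -
    have "(q \<circ> insert_perm k j) j = k"
      using permutes_not_in[OF that(2)] by (simp add: insert_perm_def)
    then show ?thesis
      using compose_permutes[OF that] by (simp add: permutes_inv_eq)
  qed
  have inv_le: "inv p k \<le> k" if "p permutes {..<Suc k}" for p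
    using permutes_in_image[OF permutes_inv[OF that], of k] by simp
  have restrict_permutes: "p \<circ> insert_perm_inv k (inv p k) permutes {..<k}"
    if p: "p permutes {..<Suc k}" for p
  proof (rule permutes_superset)
    show "p \<circ> insert_perm_inv k (inv p k) permutes {..<Suc k}"
      using permutes_compose[OF insert_perm_inv_permutes[OF inv_le[OF p]] p] .
    have "(p \<circ> insert_perm_inv k (inv p k)) k = k"
      using inv_le[OF p] by (simp add: insert_perm_inv_def permutes_inverses[OF p])
    then show "(p \<circ> insert_perm_inv k (inv p k)) x = x" if "x \<in> {..<Suc k} - {..<k}" for x
      using that by (auto simp: less_Suc_eq)
  qed
  show ?thesis
  proof (rule bij_betw_byWitness[where f'="\<lambda>p. (inv p k, p \<circ> insert_perm_inv k (inv p k))"])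
    show "\<forall>x\<in>{..k} \<times> {q. q permutes {..<k}}.
        (\<lambda>p. (inv p k, p \<circ> insert_perm_inv k (inv p k))) ((\<lambda>(j, q). q \<circ> insert_perm k j) x) = x"
      by (simp add: inv_at_k fun_eq_iff insert_perm_inv_inverse)
    show "\<forall>p\<in>{p. p permutes {..<Suc k}}.
        (\<lambda>(j, q). q \<circ> insert_perm k j) ((\<lambda>p. (inv p k, p \<circ> insert_perm_inv k (inv p k))) p) = p"
      by (simp add: inv_le fun_eq_iff insert_perm_inverse)
    show "(\<lambda>(j, q). q \<circ> insert_perm k j) ` ({..k} \<times> {q. q permutes {..<k}})
        \<subseteq> {p. p permutes {..<Suc k}}"
      using compose_permutes by auto
    show "(\<lambda>p. (inv p k, p \<circ> insert_perm_inv k (inv p k))) ` {p. p permutes {..<Suc k}}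
        \<subseteq> {..k} \<times> {q. q permutes {..<k}}"
      using inv_le restrict_permutes by auto
  qed
qed

section \<open>Symmetrization\<close>

lemma symm_permute_list:
  "symm T xs = (\<Sum>p\<in>{p. p permutes {..<length xs}}. T (permute_list p xs)) / fact (length xs)"
  by (simp add: symm_def permute_list_def)

lemma symm_cong:
  assumes "\<And>ys. length ys = length xs \<Longrightarrow> T ys = T' ys"
  shows "symm T xs = symm T' xs"
  unfolding symm_permute_list using assms by (intro arg_cong2[where f="(/)"] sum.cong) auto

lemma symm_mult_left: "symm (\<lambda>ys. c * T ys) xs = c * symm T xs"
  unfolding symm_permute_list by (simp add: sum_distrib_left)

lemma symm_mult_right: "symm (\<lambda>ys. T ys * c) xs = symm T xs * c"
  unfolding symm_permute_list by (simp add: sum_distrib_right)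

lemma symm_sum: "symm (\<lambda>ys. \<Sum>i\<in>I. T i ys) xs = (\<Sum>i\<in>I. symm (T i) xs)"
  unfolding symm_permute_list by (simp add: sum_divide_distrib[symmetric] sum.swap[of _ I])

lemma symm_permute_list_arg:
  assumes "p permutes {..<length xs}"
  shows "symm T (permute_list p xs) = symm T xs"
proof -
  have "(\<Sum>q\<in>{q. q permutes {..<length xs}}. T (permute_list q (permute_list p xs)))
      = (\<Sum>q\<in>{q. q permutes {..<length xs}}. T (permute_list (p \<circ> q) xs))"
    by (intro sum.cong) (auto simp: permute_list_compose)
  also have "\<dots> = (\<Sum>q\<in>{q. q permutes {..<length xs}}. T (permute_list q xs))"
    using setum_permutations_compose_left[OF assms, of "\<lambda>q. T (permute_list q xs)"] by simp
  finally show ?thesis by (simp add: symm_permute_list)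
qed

lemma symm_permute_list_fun:
  assumes "q permutes {..<length xs}"
  shows "symm (\<lambda>ys. T (permute_list q ys)) xs = symm T xs"
proof -
  have "(\<Sum>p\<in>{p. p permutes {..<length xs}}. T (permute_list q (permute_list p xs)))
      = (\<Sum>p\<in>{p. p permutes {..<length xs}}. T (permute_list (p \<circ> q) xs))"
    using assms by (intro sum.cong) (auto simp: permute_list_compose)
  also have "\<dots> = (\<Sum>p\<in>{p. p permutes {..<length xs}}. T (permute_list p xs))"
    using sum_permutations_compose_right[OF assms, of "\<lambda>p. T (permute_list p xs)"] by simp
  finally show ?thesis by (simp add: symm_permute_list)
qed

lemma symm_append_single:
  assumes "length xs = k"
  shows "symm T (xs @ [x]) = (\<Sum>j\<le>k. symm (\<lambda>ys. T (insert_at j x ys)) xs) / real (Suc k)"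
proof -
  let ?Q = "{q. q permutes {..<k}}"
  have "(\<Sum>p\<in>{p. p permutes {..<Suc k}}. T (permute_list p (xs @ [x])))
      = (\<Sum>(j, q)\<in>{..k} \<times> ?Q. T (permute_list (q \<circ> insert_perm k j) (xs @ [x])))"
    by (simp add: sum.reindex_bij_betw[OF bij_betw_permutes_insert_perm, symmetric] case_prod_beta)
  also have "\<dots> = (\<Sum>j\<le>k. \<Sum>q\<in>?Q. T (insert_at j x (permute_list q xs)))"
    unfolding sum.cartesian_product[symmetric]
  proof (intro sum.cong refl)
    fix j q assume "j \<in> {..k}" "q \<in> ?Q"
    then have j: "j \<le> k" and q: "q permutes {..<length xs}" using assms by auto
    have "permute_list (q \<circ> insert_perm k j) (xs @ [x])
        = permute_list (insert_perm k j) (permute_list q (xs @ [x]))"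
      using insert_perm_permutes[OF j] assms by (intro permute_list_compose) simp
    also have "\<dots> = insert_at j x (permute_list q xs)"
      using assms j by (simp add: permute_list_append_fixed[OF q] permute_list_insert_perm)
    finally show "T (permute_list (q \<circ> insert_perm k j) (xs @ [x])) = T (insert_at j x (permute_list q xs))"
      by simp
  qed
  finally show ?thesis
    using assms by (simp add: symm_permute_list sum_divide_distrib mult.commute)
qed

section \<open>Products of metrics and raised covectors\<close>

lemma gm_sym: "gm a b = gm b a"
  by (simp add: gm_def)

lemma raise_eq_sum_left: "raise mu a = (\<Sum>b\<in>UNIV. gm b a * mu $ b)"
  by (simp add: raise_def gm_sym)

lemma gprod_0 [simp]: "gprod 0 xs = 1"
  by (simp add: gprod_def)

lemma gprod_Suc_Cons_Cons: "gprod (Suc s) (a # b # xs) = gm a b * gprod s xs"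
  unfolding gprod_def prod.lessThan_Suc_shift by simp

fun gmu :: "nat \<Rightarrow> real^4 \<Rightarrow> 4 list \<Rightarrow> real" where
  "gmu 0 mu xs = prod_list (map (raise mu) xs)"
| "gmu (Suc s) mu (a # b # xs) = gm a b * gmu s mu xs"
| "gmu (Suc s) mu _ = 0"

lemma gmuT_eq_gmu: "2 * s \<le> length xs \<Longrightarrow> gmuT s mu xs = gmu s mu xs"
proof (induction s arbitrary: xs)
  case 0
  have "(\<Prod>j\<in>{0..<length xs}. raise mu (xs ! j)) = prod_list (map (raise mu) xs)"
    by (simp add: prod.list_conv_set_nth)
  then show ?case by (simp add: gmuT_def)
next
  case (Suc s)
  then obtain a b ys where xs: "xs = a # b # ys"
    using length_ge_2_Cons_Cons[of xs] by auto
  have "(\<Prod>j\<in>{2 * Suc s..<length xs}. raise mu (xs ! j)) = (\<Prod>j\<in>{2 * s..<length ys}. raise mu (ys ! j))"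
    unfolding xs by (simp only: mult_Suc_right length_Cons add_2_eq_Suc prod.shift_bounds_Suc_ivl nth_Cons_Suc)
  then show ?case
    using Suc xs by (simp add: gmuT_def gprod_Suc_Cons_Cons)
qed

text \<open>\<open>gmu_contracted mu i s\<close> is \<open>gmu s mu\<close> with the second index of its \<open>i\<close>-th metric factor
  (counting from 0) contracted against \<open>mu\<close>: that factor \<open>g\<^sup>a\<^sup>b mu\<^sub>b\<close> becomes \<open>mu\<^sup>a\<close>.\<close>

fun gmu_contracted :: "real^4 \<Rightarrow> nat \<Rightarrow> nat \<Rightarrow> 4 list \<Rightarrow> real" where
  "gmu_contracted mu 0 (Suc s) (a # xs) = raise mu a * gmu s mu xs"
| "gmu_contracted mu (Suc i) (Suc s) (a # b # xs) = gm a b * gmu_contracted mu i s xs"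
| "gmu_contracted mu _ _ _ = 0"

lemma sum_gmu_insert_at_raised:
  "2 * s \<le> j \<Longrightarrow> j \<le> length xs \<Longrightarrow>
    (\<Sum>c\<in>UNIV. gmu s mu (insert_at j c xs) * mu $ c) = mdot mu * gmu s mu xs"
proof (induction s arbitrary: j xs)
  case 0
  have "gmu 0 mu (insert_at j c xs) = raise mu c * gmu 0 mu xs" for c
  proof -
    have "gmu 0 mu xs = prod_list (map (raise mu) (take j xs)) * prod_list (map (raise mu) (drop j xs))"
      by (metis append_take_drop_id gmu.simps(1) map_append prod_list.append)
    then show ?thesis by (simp add: insert_at_def)
  qed
  then show ?case
    by (simp add: mdot_def sum_distrib_left sum_distrib_right mult_ac)
next
  case (Suc s)
  then obtain a b ys where xs: "xs = a # b # ys"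
    using length_ge_2_Cons_Cons[of xs] by auto
  obtain i where j: "j = Suc (Suc i)"
    using Suc.prems(1) by (intro that[of "j - 2"]) simp
  have "(\<Sum>c\<in>UNIV. gmu (Suc s) mu (insert_at j c xs) * mu $ c)
      = gm a b * (\<Sum>c\<in>UNIV. gmu s mu (insert_at i c ys) * mu $ c)"
    by (simp add: xs j sum_distrib_left mult_ac)
  also have "\<dots> = gm a b * (mdot mu * gmu s mu ys)"
    using Suc.IH[of i ys] Suc.prems xs j by simp
  finally show ?case by (simp add: xs)
qed

lemma sum_gmu_insert_at_metric:
  "j < 2 * s \<Longrightarrow> 2 * s \<le> Suc (length xs) \<Longrightarrow>
    (\<Sum>c\<in>UNIV. gmu s mu (insert_at j c xs) * mu $ c) = gmu_contracted mu (j div 2) s xs"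
proof (induction s arbitrary: j xs)
  case 0
  then show ?case by simp
next
  case (Suc s)
  show ?case
  proof (cases "j < 2")
    case True
    obtain a ys where xs: "xs = a # ys"
      using Suc.prems by (cases xs) auto
    consider "j = 0" | "j = Suc 0" using True by linarith
    then have "(\<Sum>c\<in>UNIV. gmu (Suc s) mu (insert_at j c xs) * mu $ c) = raise mu a * gmu s mu ys"
    proof cases
      case 1
      then show ?thesis by (simp add: xs raise_eq_sum_left sum_distrib_left sum_distrib_right mult_ac)
    next
      case 2
      then show ?thesis by (simp add: xs raise_def sum_distrib_left sum_distrib_right mult_ac)
    qed
    then show ?thesis using True xs by simp
  next
    case False
    then obtain a b ys where xs: "xs = a # b # ys"
      using Suc.prems length_ge_2_Cons_Cons[of xs] by auto
    obtain i where j: "j = Suc (Suc i)"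
      using False by (intro that[of "j - 2"]) simp
    have "(\<Sum>c\<in>UNIV. gmu (Suc s) mu (insert_at j c xs) * mu $ c)
        = gm a b * (\<Sum>c\<in>UNIV. gmu s mu (insert_at i c ys) * mu $ c)"
      by (simp add: xs j sum_distrib_left mult_ac)
    also have "\<dots> = gm a b * gmu_contracted mu (i div 2) s ys"
      using Suc.IH[of i ys] Suc.prems xs j by simp
    finally show ?thesis by (simp add: xs j)
  qed
qed

lemma gmu_contracted_last: "2 * s < length xs \<Longrightarrow> gmu_contracted mu s (Suc s) xs = gmu s mu xs"
proof (induction s arbitrary: xs)
  case 0
  then show ?case by (cases xs) auto
next
  case (Suc s)
  then obtain a b ys where "xs = a # b # ys"
    using length_ge_2_Cons_Cons[of xs] by auto
  then show ?case
    using Suc by simp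
qed

lemma gmu_contracted_transpose:
  "Suc i < s \<Longrightarrow> 2 * s \<le> Suc (length xs) \<Longrightarrow>
    gmu_contracted mu i s (permute_list (Transposition.transpose (2 * i) (2 * i + 2)) xs)
      = gmu_contracted mu (Suc i) s xs"
proof (induction i arbitrary: s xs)
  case 0
  then obtain s' where s: "s = Suc (Suc s')"
    by (intro that[of "s - 2"]) simp
  obtain a b c ys where xs: "xs = a # b # c # ys"
    using 0 by (cases xs; cases "tl xs"; cases "tl (tl xs)") auto
  have "permute_list (Transposition.transpose (2 * 0) (2 * 0 + 2)) xs = c # b # a # ys"
    unfolding xs by (simp only: mult_zero_right add_0 permute_list_transpose_0_2)
  then show ?case
    by (simp add: s xs gm_sym)
next
  case (Suc i)
  then obtain s' where s: "s = Suc s'"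
    by (cases s) auto
  obtain a b ys where xs: "xs = a # b # ys"
    using Suc.prems length_ge_2_Cons_Cons[of xs] by auto
  have "Transposition.transpose (2 * Suc i) (2 * Suc i + 2)
      = Transposition.transpose (Suc (Suc (2 * i))) (Suc (Suc (2 * i + 2)))"
    by simp
  then have "permute_list (Transposition.transpose (2 * Suc i) (2 * Suc i + 2)) xs
      = a # b # permute_list (Transposition.transpose (2 * i) (2 * i + 2)) ys"
    by (simp only: xs permute_list_transpose_Suc_Cons)
  then show ?case
    using Suc.IH[of s' ys] Suc.prems s xs by simp
qed

lemma symm_gmu_contracted:
  "i < s \<Longrightarrow> 2 * s \<le> Suc (length xs) \<Longrightarrow> symm (gmu_contracted mu i s) xs = symm (gmu (s - 1) mu) xs"
proof (induction "s - 1 - i" arbitrary: i)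
  case 0
  then obtain s' where s: "s = Suc s'" and i: "i = s'"
    by (cases s) auto
  show ?case
    using 0 by (intro symm_cong) (simp add: s i gmu_contracted_last)
next
  case (Suc d)
  let ?\<tau> = "Transposition.transpose (2 * i) (2 * i + 2)"
  have "symm (gmu_contracted mu i s) xs = symm (\<lambda>ys. gmu_contracted mu i s (permute_list ?\<tau> ys)) xs"
    using Suc.hyps(2) Suc.prems by (intro symm_permute_list_fun[symmetric] permutes_swap_id) auto
  also have "\<dots> = symm (gmu_contracted mu (Suc i) s) xs"
    using Suc.hyps(2) Suc.prems by (intro symm_cong gmu_contracted_transpose) auto
  also have "\<dots> = symm (gmu (s - 1) mu) xs"
    using Suc by (intro Suc.hyps) auto
  finally show ?case .
qed

lemma sum_symm_gmu_append_mu: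
  assumes xs: "length xs = k" and s: "2 * s \<le> Suc k"
  shows "(\<Sum>c\<in>UNIV. symm (gmu s mu) (xs @ [c]) * mu $ c)
    = (real (Suc k - 2 * s) * mdot mu * symm (gmu s mu) xs + real (2 * s) * symm (gmu (s - 1) mu) xs)
        / real (Suc k)"
proof -
  define H where "H = (\<lambda>j ys. \<Sum>c\<in>UNIV. gmu s mu (insert_at j c ys) * mu $ c)"
  have "(\<Sum>c\<in>UNIV. symm (gmu s mu) (xs @ [c]) * mu $ c)
      = (\<Sum>c\<in>UNIV. \<Sum>j\<le>k. symm (\<lambda>ys. gmu s mu (insert_at j c ys)) xs * mu $ c) / real (Suc k)"
    by (simp add: symm_append_single[OF xs] sum_divide_distrib sum_distrib_right)
  also have "\<dots> = (\<Sum>j\<le>k. \<Sum>c\<in>UNIV. symm (\<lambda>ys. gmu s mu (insert_at j c ys)) xs * mu $ c) / real (Suc k)"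
    by (subst sum.swap) (rule refl)
  also have "\<dots> = (\<Sum>j\<le>k. symm (H j) xs) / real (Suc k)"
    unfolding H_def by (simp only: symm_sum symm_mult_right)
  also have "(\<Sum>j\<le>k. symm (H j) xs) = (\<Sum>j<2 * s. symm (H j) xs) + (\<Sum>j\<in>{2 * s..k}. symm (H j) xs)"
    using s by (subst sum.union_disjoint[symmetric]) (auto intro: sum.cong)
  also have "(\<Sum>j<2 * s. symm (H j) xs) = (\<Sum>j<2 * s. symm (gmu (s - 1) mu) xs)"
  proof (rule sum.cong[OF refl])
    fix j assume "j \<in> {..<2 * s}"
    then have "symm (H j) xs = symm (gmu_contracted mu (j div 2) s) xs"
      using xs s by (intro symm_cong) (simp add: H_def sum_gmu_insert_at_metric)
    also have "\<dots> = symm (gmu (s - 1) mu) xs"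
      using \<open>j \<in> {..<2 * s}\<close> xs s by (intro symm_gmu_contracted) auto
    finally show "symm (H j) xs = symm (gmu (s - 1) mu) xs" .
  qed
  also have "(\<Sum>j\<in>{2 * s..k}. symm (H j) xs) = (\<Sum>j\<in>{2 * s..k}. mdot mu * symm (gmu s mu) xs)"
  proof (rule sum.cong[OF refl])
    fix j assume "j \<in> {2 * s..k}"
    then have "symm (H j) xs = symm (\<lambda>ys. mdot mu * gmu s mu ys) xs"
      using xs by (intro symm_cong) (simp add: H_def sum_gmu_insert_at_raised)
    then show "symm (H j) xs = mdot mu * symm (gmu s mu) xs"
      by (simp add: symm_mult_left)
  qed
  finally show ?thesis
    using s by (simp add: algebra_simps of_nat_diff)
qed

section \<open>The expansion coefficients\<close>

lemma dfact_pos: "dfact k > 0"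
  by (induction k rule: dfact.induct) auto

lemma dfact_Suc_mult_dfact: "real (dfact (Suc k)) * real (dfact k) = fact (Suc k)"
proof (induction k)
  case (Suc k)
  have "real (dfact (Suc (Suc k))) * real (dfact (Suc k))
      = real (Suc (Suc k)) * (real (dfact (Suc k)) * real (dfact k))"
    by (simp add: algebra_simps)
  then show ?case
    by (simp only: Suc.IH fact_Suc[of "Suc k"])
qed simp

lemma dfact_mult_dfact_pred: "real (dfact k) * real (dfact (k - 1)) = fact k"
  using dfact_Suc_mult_dfact[of "k - 1"] by (cases k) auto

lemma fact_diff_eq_mult_fact_diff_Suc: "r < n \<Longrightarrow> fact (n - r) = real (n - r) * fact (n - Suc r)"
  using fact_reduce[of "n - r", where 'a=real] by simp

text \<open>The \<open>r \<ge> 2\<close> branch of \<open>phicoef\<close>, taken for all \<open>r\<close>, with \<open>x\<close> in place of \<open>-\<gamma>\<^sup>2\<close> and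
  with the range \<open>2 s \<le> n - r\<close> made explicit.\<close>

definition expansion_coeff :: "nat \<Rightarrow> nat \<Rightarrow> nat \<Rightarrow> real \<Rightarrow> real" where
  "expansion_coeff n r s x =
    (if 2 * s \<le> n - r \<and> n div 2 \<le> s + r then
       fact r * fact (n - r) /
         (real (dfact (2 * s + 2 * r - n)) * real (dfact (2 * s)) * fact (n - r - 2 * s) * real (dfact (n - 1)))
       * x ^ (s + r - n div 2)
     else 0)"

lemma expansion_coeff_eq_0: "n - r < 2 * s \<or> s + r < n div 2 \<Longrightarrow> expansion_coeff n r s x = 0"
  by (auto simp: expansion_coeff_def)

text \<open>On its support, \<open>s + r - n/2\<close> and \<open>n - r - 2 s\<close> are natural numbers \<open>d\<close> and \<open>b\<close>; in these
  parameters the coefficient has no truncated subtractions.\<close>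

lemma expansion_coeff_param:
  assumes "n = 2 * (s + d + b)" "r = 2 * d + b"
  shows "expansion_coeff n r s x
    = fact r * fact (n - r)
      / (real (dfact (2 * d)) * real (dfact (2 * s)) * fact b * real (dfact (n - 1))) * x ^ d"
proof -
  have "2 * s + 2 * r - n = 2 * d" "n - r - 2 * s = b" "s + r - n div 2 = d"
    using assms by simp_all
  then show ?thesis
    using assms by (simp add: expansion_coeff_def)
qed

lemma expansion_coeff_Suc_at_min:
  assumes n: "n = 2 * (t + Suc r)"
  shows "expansion_coeff n r (Suc t) x * real (2 * Suc t) / real (n - r) = expansion_coeff n (Suc r) t x"
proof -
  define R S Fk K P f Dn where "R = (fact r :: real)" and "S = (fact (Suc r) :: real)"
    and "Fk = (fact (n - Suc r) :: real)" and "K = real (n - r)" and "P = real (dfact (2 * t))"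
    and "f = real (2 * Suc t)" and "Dn = real (dfact (n - 1))"
  have nonzero: "R \<noteq> 0" "S \<noteq> 0" "P \<noteq> 0" "f \<noteq> 0" "Dn \<noteq> 0"
    using dfact_pos by (simp_all add: R_def S_def P_def f_def Dn_def)
  have "K \<noteq> 0"
    by (simp add: K_def n)
  have c2: "expansion_coeff n r (Suc t) x = R * (K * Fk) / ((f * P) * R * Dn)"
  proof -
    have "n = 2 * (Suc t + 0 + r)" "r = 2 * 0 + r"
      using n by simp_all
    from expansion_coeff_param[OF this] show ?thesis
      using n by (simp add: fact_diff_eq_mult_fact_diff_Suc R_def Fk_def K_def P_def f_def Dn_def algebra_simps)
  qed
  have c3: "expansion_coeff n (Suc r) t x = S * Fk / (P * S * Dn)"
  proof -
    have "n = 2 * (t + 0 + Suc r)" "Suc r = 2 * 0 + Suc r"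
      using n by simp_all
    from expansion_coeff_param[OF this] show ?thesis
      by (simp add: S_def Fk_def P_def Dn_def)
  qed
  show ?thesis
    unfolding c2 c3 K_def[symmetric] f_def[symmetric] using nonzero \<open>K \<noteq> 0\<close> by (simp add: field_simps)
qed

lemma expansion_coeff_Suc_at_max:
  assumes n: "n = 2 * (t + Suc D)" and r: "r = 2 * D + 1"
  shows "expansion_coeff n r t x * x / real (n - r) = expansion_coeff n (Suc r) t x"
proof -
  define R Fk K P Q e Dn where "R = (fact r :: real)" and "Fk = (fact (n - Suc r) :: real)"
    and "K = real (n - r)" and "P = real (dfact (2 * t))" and "Q = real (dfact (2 * D))"
    and "e = real (2 * Suc D)" and "Dn = real (dfact (n - 1))"
  have nonzero: "R \<noteq> 0" "P \<noteq> 0" "Q \<noteq> 0" "e \<noteq> 0" "Dn \<noteq> 0"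
    using dfact_pos by (simp_all add: R_def P_def Q_def e_def Dn_def)
  have "K \<noteq> 0"
    by (simp add: K_def n r)
  have c1: "expansion_coeff n r t x = R * (K * Fk) / (Q * P * Dn) * x ^ D"
  proof -
    have "n = 2 * (t + D + 1)" "r = 2 * D + 1"
      using n r by simp_all
    from expansion_coeff_param[OF this] show ?thesis
      using n r by (simp add: fact_diff_eq_mult_fact_diff_Suc R_def Fk_def K_def Q_def P_def Dn_def)
  qed
  have c3: "expansion_coeff n (Suc r) t x = (e * R) * Fk / ((e * Q) * P * Dn) * (x * x ^ D)"
  proof -
    have "n = 2 * (t + Suc D + 0)" "Suc r = 2 * Suc D + 0"
      using n r by simp_all
    from expansion_coeff_param[OF this] show ?thesis
      using r by (simp add: R_def Fk_def Q_def P_def e_def Dn_def algebra_simps)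
  qed
  show ?thesis
    unfolding c1 c3 K_def[symmetric] using nonzero \<open>K \<noteq> 0\<close> by (simp add: field_simps)
qed

lemma expansion_coeff_Suc_interior:
  assumes n: "n = 2 * (t + Suc D + Suc B)" and r: "r = 2 * D + Suc (Suc B)"
  shows "expansion_coeff n r t x * real (n - r - 2 * t) * x / real (n - r)
           + expansion_coeff n r (Suc t) x * real (2 * Suc t) / real (n - r)
         = expansion_coeff n (Suc r) t x"
proof -
  define R Fk K P Q e f F p q Dn where "R = (fact r :: real)" and "Fk = (fact (n - Suc r) :: real)"
    and "K = real (n - r)" and "P = real (dfact (2 * t))" and "Q = real (dfact (2 * D))"
    and "e = real (2 * Suc D)" and "f = real (2 * Suc t)" and "F = (fact B :: real)"
    and "p = real (Suc B)" and "q = real (Suc (Suc B))" and "Dn = real (dfact (n - 1))"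
  have nonzero: "R \<noteq> 0" "P \<noteq> 0" "Q \<noteq> 0" "e \<noteq> 0" "f \<noteq> 0" "F \<noteq> 0" "p \<noteq> 0" "q \<noteq> 0"
    "Dn \<noteq> 0"
    using dfact_pos by (simp_all add: R_def P_def Q_def e_def f_def F_def p_def q_def Dn_def)
  have "K \<noteq> 0"
    by (simp add: K_def n r)
  have c1: "expansion_coeff n r t x = R * (K * Fk) / (Q * P * (q * p * F) * Dn) * x ^ D"
  proof -
    have "n = 2 * (t + D + Suc (Suc B))" "r = 2 * D + Suc (Suc B)"
      using n r by simp_all
    from expansion_coeff_param[OF this] show ?thesis
      using n r by (simp add: fact_diff_eq_mult_fact_diff_Suc R_def Fk_def K_def P_def Q_def F_def p_def q_def
          Dn_def algebra_simps)
  qed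
  have c2: "expansion_coeff n r (Suc t) x = R * (K * Fk) / ((e * Q) * (f * P) * F * Dn) * (x * x ^ D)"
  proof -
    have "n = 2 * (Suc t + Suc D + B)" "r = 2 * Suc D + B"
      using n r by simp_all
    from expansion_coeff_param[OF this] show ?thesis
      using n r by (simp add: fact_diff_eq_mult_fact_diff_Suc R_def Fk_def K_def P_def Q_def e_def f_def F_def
          Dn_def algebra_simps)
  qed
  have c3: "expansion_coeff n (Suc r) t x = ((e + p) * R) * Fk / ((e * Q) * P * (p * F) * Dn) * (x * x ^ D)"
  proof -
    have "n = 2 * (t + Suc D + Suc B)" "Suc r = 2 * Suc D + Suc B"
      using n r by simp_all
    from expansion_coeff_param[OF this] show ?thesis
      using r by (simp add: R_def Fk_def P_def Q_def e_def F_def p_def Dn_def algebra_simps)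
  qed
  have "real (n - r - 2 * t) = q"
    using n r by (simp add: q_def)
  then show ?thesis
    unfolding c1 c2 c3 K_def[symmetric] f_def[symmetric] using nonzero \<open>K \<noteq> 0\<close> by (simp add: field_simps)
qed

lemma expansion_coeff_recursion:
  assumes "even n" "Suc r \<le> n"
  shows "expansion_coeff n r t x * real (n - r - 2 * t) * x / real (n - r)
           + expansion_coeff n r (Suc t) x * real (2 * Suc t) / real (n - r)
         = expansion_coeff n (Suc r) t x"
proof -
  obtain m where m: "n = 2 * m"
    using assms(1) by blast
  show ?thesis
  proof (cases "2 * t < n - r \<and> m \<le> t + r + 1")
    case False
    then show ?thesis
      using assms by (auto simp: expansion_coeff_def m)
  next
    case True
    define d b where "d = t + r + 1 - m" and "b = n - r - 1 - 2 * t"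
    have "d + m = t + r + 1" "b + r + 1 + 2 * t = n"
      using True assms(2) unfolding d_def b_def m by linarith+
    then have n: "n = 2 * (t + d + b)" and r: "Suc r = 2 * d + b"
      using m by simp_all
    consider "d = 0" | D where "d = Suc D" "b = 0" | D B where "d = Suc D" "b = Suc B"
      by (cases d; cases b) auto
    then show ?thesis
    proof cases
      case 1
      then have "n = 2 * (t + Suc r)"
        using n r by simp
      from expansion_coeff_Suc_at_min[OF this] show ?thesis
        using n r 1 by (simp add: expansion_coeff_eq_0)
    next
      case 2
      then have "n = 2 * (t + Suc D)" "r = 2 * D + 1"
        using n r by simp_all
      moreover have "real (n - r - 2 * t) = 1"
        using n r 2 by simp
      ultimately show ?thesis
        using expansion_coeff_Suc_at_max[of n t D r x] by (simp add: expansion_coeff_eq_0)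
    next
      case 3
      then have "n = 2 * (t + Suc D + Suc B)" "r = 2 * D + Suc (Suc B)"
        using n r by simp_all
      then show ?thesis
        by (rule expansion_coeff_Suc_interior)
    qed
  qed
qed

lemma expansion_coeff_top:
  assumes "even n" "r \<le> 1" "r \<le> n"
  shows "expansion_coeff n r ((n - r) div 2) x = 1"
proof -
  define s where "s = (n - r) div 2"
  have n: "n = 2 * (s + 0 + r)"
    using assms unfolding s_def by presburger
  have "real (dfact (2 * s)) * real (dfact (n - 1)) = fact (n - r)"
  proof (cases "r = 0")
    case True
    then show ?thesis
      using dfact_mult_dfact_pred[of n] n by simp
  next
    case False
    then have "n - 1 = Suc (2 * s)" "n - r = Suc (2 * s)"
      using assms(2) n by simp_all
    then show ?thesis
      using dfact_Suc_mult_dfact[of "2 * s"] by (simp only: mult.commute)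
  qed
  then show ?thesis
    using expansion_coeff_param[OF n, of r] dfact_pos[of "n - 1"] dfact_pos[of "2 * s"]
    by (simp add: s_def)
qed

lemma expansion_coeff_0:
  assumes "even n"
  shows "expansion_coeff n 0 s x = (if s = n div 2 then 1 else 0)"
proof (cases "s = n div 2")
  case True
  then show ?thesis
    using expansion_coeff_top[OF assms, of 0] by simp
next
  case False
  then have "n - 0 < 2 * s \<or> s + 0 < n div 2"
    using assms by presburger
  from expansion_coeff_eq_0[OF this] show ?thesis
    using False by simp
qed

lemma phicoef_eq_expansion_coeff:
  assumes "even n" "r \<le> n" "s \<le> (n - r) div 2"
  shows "phicoef n r s g = expansion_coeff n r s (- (g ^ 2))"
proof (cases "r \<le> 1")
  case False
  then show ?thesis
    using assms(3) by (simp add: phicoef_def expansion_coeff_def)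
next
  case True
  moreover have "s + r < n div 2" if "s \<noteq> (n - r) div 2"
    using assms True that by presburger
  ultimately show ?thesis
    using expansion_coeff_top[OF assms(1) True assms(2)] by (auto simp: phicoef_def expansion_coeff_eq_0)
qed

section \<open>The expansion\<close>

lemma gam_squared: "timelike mu \<Longrightarrow> mdot mu = - (gam mu ^ 2)"
  unfolding timelike_def gam_def by simp

lemma lhsT_Suc: "lhsT n (Suc r) mu A = (\<Sum>c\<in>UNIV. mu $ c * lhsT n r mu (A @ [c]))"
proof -
  have "lhsT n (Suc r) mu A = (\<Sum>c\<in>UNIV. \<Sum>C\<in>{C. length C = r}.
      mu $ c * (symm (gprod (n div 2)) ((A @ [c]) @ C) * (\<Prod>j<r. mu $ (C ! j))))"
    unfolding lhsT_def sum_lists_length_Suc prod.lessThan_Suc_shift by (simp add: mult_ac)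
  then show ?thesis
    unfolding lhsT_def by (simp add: sum_distrib_left)
qed

lemma lhsT_0:
  assumes "even n" "length A = n"
  shows "lhsT n 0 mu A = symm (gmu (n div 2) mu) A"
proof -
  have "lhsT n 0 mu A = symm (gprod (n div 2)) A"
    by (simp add: lhsT_def)
  also have "\<dots> = symm (gmuT (n div 2) mu) A"
    using assms by (intro symm_cong) (simp add: gmuT_def)
  also have "\<dots> = symm (gmu (n div 2) mu) A"
    using assms by (intro symm_cong gmuT_eq_gmu) simp
  finally show ?thesis .
qed

lemma expansion_coeff_mult_sum_symm_gmu_append_mu:
  assumes "Suc r \<le> n" "length A = n - Suc r"
  shows "expansion_coeff n r s x * (\<Sum>c\<in>UNIV. symm (gmu s mu) (A @ [c]) * mu $ c)
    = expansion_coeff n r s x * real (n - r - 2 * s) * mdot mu / real (n - r) * symm (gmu s mu) A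
      + expansion_coeff n r s x * real (2 * s) / real (n - r) * symm (gmu (s - 1) mu) A"
proof (cases "2 * s \<le> n - r")
  case True
  have "n - r = Suc (n - Suc r)"
    using assms(1) by simp
  then have "(\<Sum>c\<in>UNIV. symm (gmu s mu) (A @ [c]) * mu $ c)
      = (real (n - r - 2 * s) * mdot mu * symm (gmu s mu) A + real (2 * s) * symm (gmu (s - 1) mu) A)
        / real (n - r)"
    using sum_symm_gmu_append_mu[OF assms(2), of s mu] True by simp
  then show ?thesis
    by (simp add: add_divide_distrib distrib_left mult_ac)
next
  case False
  then show ?thesis
    by (simp add: expansion_coeff_eq_0)
qed

lemma sum_mu_expansion_append:
  assumes "even n" "Suc r \<le> n" "length A = n - Suc r"
  shows "(\<Sum>c\<in>UNIV. mu $ c * (\<Sum>s\<le>n. expansion_coeff n r s (mdot mu) * symm (gmu s mu) (A @ [c])))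
       = (\<Sum>s\<le>n. expansion_coeff n (Suc r) s (mdot mu) * symm (gmu s mu) A)"
proof -
  let ?x = "mdot mu"
  let ?G = "\<lambda>s. symm (gmu s mu) A"
  define a b where "a s = expansion_coeff n r s ?x * real (n - r - 2 * s) * ?x / real (n - r)"
    and "b s = expansion_coeff n r s ?x * real (2 * s) / real (n - r)" for s
  have "expansion_coeff n r (Suc n) ?x = 0"
    by (intro expansion_coeff_eq_0 disjI1) simp
  then have "b (Suc n) = 0"
    by (simp add: b_def)
  have "(\<Sum>c\<in>UNIV. mu $ c * (\<Sum>s\<le>n. expansion_coeff n r s ?x * symm (gmu s mu) (A @ [c])))
      = (\<Sum>s\<le>n. expansion_coeff n r s ?x * (\<Sum>c\<in>UNIV. symm (gmu s mu) (A @ [c]) * mu $ c))"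
    by (simp add: sum_distrib_left sum.swap[of _ UNIV] mult_ac)
  also have "\<dots> = (\<Sum>s\<le>n. a s * ?G s) + (\<Sum>s\<le>n. b s * ?G (s - 1))"
    unfolding a_def b_def sum.distrib[symmetric]
    using assms(2,3) by (intro sum.cong refl expansion_coeff_mult_sum_symm_gmu_append_mu)
  also have "\<dots> = (\<Sum>s\<le>n. a s * ?G s) + (\<Sum>s\<le>n. b (Suc s) * ?G s)"
    using sum_atMost_shift_pred[of b n ?G] \<open>b (Suc n) = 0\<close> by (simp add: b_def)
  also have "\<dots> = (\<Sum>s\<le>n. (a s + b (Suc s)) * ?G s)"
    by (simp add: sum.distrib distrib_right)
  also have "\<dots> = (\<Sum>s\<le>n. expansion_coeff n (Suc r) s ?x * ?G s)"
    unfolding a_def b_def expansion_coeff_recursion[OF assms(1,2)] ..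
  finally show ?thesis .
qed

lemma lhsT_eq_expansion:
  assumes "even n" "r \<le> n" "length A = n - r"
  shows "lhsT n r mu A = (\<Sum>s\<le>n. expansion_coeff n r s (mdot mu) * symm (gmu s mu) A)"
  using assms(2,3)
proof (induction r arbitrary: A)
  case 0
  have "(\<Sum>s\<le>n. expansion_coeff n 0 s (mdot mu) * symm (gmu s mu) A)
      = (\<Sum>s\<le>n. if s = n div 2 then symm (gmu s mu) A else 0)"
    by (intro sum.cong) (simp_all add: expansion_coeff_0[OF assms(1)])
  then show ?case
    using lhsT_0[OF assms(1)] 0 by simp
next
  case (Suc r)
  then show ?case
    using sum_mu_expansion_append[OF assms(1) Suc.prems(1)] by (simp add: lhsT_Suc Suc.IH)
qed

lemma lhsT_eq_phicoef_expansion: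
  assumes "even n" "r \<le> n" "timelike mu" "length A = n - r"
  shows "lhsT n r mu A = (\<Sum>s = 0..(n - r) div 2. phicoef n r s (gam mu) * symm (gmuT s mu) A)"
proof -
  have "lhsT n r mu A = (\<Sum>s\<le>n. expansion_coeff n r s (mdot mu) * symm (gmu s mu) A)"
    by (rule lhsT_eq_expansion[OF assms(1,2,4)])
  also have "\<dots> = (\<Sum>s = 0..(n - r) div 2. expansion_coeff n r s (mdot mu) * symm (gmu s mu) A)"
  proof (rule sum.mono_neutral_right)
    show "\<forall>s\<in>{..n} - {0..(n - r) div 2}. expansion_coeff n r s (mdot mu) * symm (gmu s mu) A = 0"
      by (auto intro!: expansion_coeff_eq_0)
  qed auto
  also have "\<dots> = (\<Sum>s = 0..(n - r) div 2. phicoef n r s (gam mu) * symm (gmuT s mu) A)"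
  proof (rule sum.cong[OF refl])
    fix s assume s: "s \<in> {0..(n - r) div 2}"
    have "symm (gmu s mu) A = symm (gmuT s mu) A"
      using s assms(4) by (intro symm_cong gmuT_eq_gmu[symmetric]) auto
    then show "expansion_coeff n r s (mdot mu) * symm (gmu s mu) A = phicoef n r s (gam mu) * symm (gmuT s mu) A"
      using s phicoef_eq_expansion_coeff[OF assms(1,2)] gam_squared[OF assms(3)] by simp
  qed
  finally show ?thesis .
qed

section \<open>Smoothness and symmetry\<close>

lemma real_polynomial_function_frechet_derivative:
  assumes "real_polynomial_function f"
  shows "real_polynomial_function (\<lambda>x. frechet_derivative f (at x) v)"
  using assms
proof (induction f rule: real_polynomial_function.induct)
  case (linear f)
  then show ?case
    by (auto simp add: frechet_derivative_at[OF bounded_linear_imp_has_derivative, symmetric])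
next
  case (const c)
  then show ?case
    by (auto simp add: frechet_derivative_at[OF has_derivative_const, symmetric])
next
  case (add f g)
  have "frechet_derivative (\<lambda>x. f x + g x) (at x)
      = (\<lambda>v. frechet_derivative f (at x) v + frechet_derivative g (at x) v)" for x
    using add.hyps by (intro frechet_derivative_at[symmetric] has_derivative_add
        frechet_derivative_works[THEN iffD1] differentiable_at_real_polynomial_function)
  then show ?case
    using add.IH by auto
next
  case (mult f g)
  have "frechet_derivative (\<lambda>x. f x * g x) (at x)
      = (\<lambda>v. f x * frechet_derivative g (at x) v + frechet_derivative f (at x) v * g x)" for x
    using mult.hyps by (intro frechet_derivative_at[symmetric] has_derivative_mult
        frechet_derivative_works[THEN iffD1] differentiable_at_real_polynomial_function)
  then show ?case
    using mult.hyps mult.IH by auto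
qed

lemma Ck_real_polynomial_function:
  fixes f :: "'a::euclidean_space \<Rightarrow> real"
  shows "real_polynomial_function f \<Longrightarrow> Ck k U f"
proof (induction k arbitrary: f)
  case 0
  then show ?case
    by (simp add: differentiable_imp_continuous_on differentiable_on_real_polynomial_function)
next
  case (Suc k)
  then show ?case
    by (simp add: differentiable_at_real_polynomial_function real_polynomial_function_frechet_derivative)
qed

lemma smooth_on_real_polynomial_function:
  "real_polynomial_function f \<Longrightarrow> smooth_on U f"
  by (simp add: smooth_on_def Ck_real_polynomial_function)

lemma real_polynomial_function_lhsT: "real_polynomial_function (\<lambda>p::real \<times> (real^4). lhsT n r (snd p) A)"
proof -
  have "bounded_linear (\<lambda>p::real \<times> (real^4). snd p $ i)" for i
    by (intro bounded_linear_compose[OF bounded_linear_vec_nth bounded_linear_snd])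
  then show ?thesis
    unfolding lhsT_def
    by (intro real_polynomial_function_sum real_polynomial_function.intros real_polynomial_function_prod
        finite_lists_length finite_lessThan)
qed

lemma lhsT_permute_list:
  assumes "p permutes {..<length A}"
  shows "lhsT n r mu (permute_list p A) = lhsT n r mu A"
proof -
  have "symm (gprod (n div 2)) (permute_list p A @ C) = symm (gprod (n div 2)) (A @ C)" for C :: "4 list"
  proof -
    have "p permutes {..<length (A @ C)}"
      using assms by (rule permutes_subset) auto
    then show ?thesis
      using permute_list_append_fixed[OF assms] symm_permute_list_arg by metis
  qed
  then show ?thesis
    by (simp add: lhsT_def)
qed

lemma tsym_lhsT: "tsym k (lhsT n r mu)"
  unfolding tsym_def using lhsT_permute_list by (metis permute_list_def)

lemma lhsT_swap_last: "lhsT n r mu (A @ [b, c]) = lhsT n r mu (A @ [c, b])"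
proof -
  let ?\<tau> = "Transposition.transpose (length A) (Suc (length A))"
  have "permute_list ?\<tau> (A @ [b, c]) = A @ [c, b]"
    by (intro nth_equalityI)
       (auto simp: permute_list_def Transposition.transpose_def nth_append simp del: upt_Suc)
  moreover have "?\<tau> permutes {..<length (A @ [b, c])}"
    by (intro permutes_swap_id) auto
  ultimately show ?thesis
    using lhsT_permute_list by metis
qed

lemma sum_mu_sum_lhsT_append:
  "(\<Sum>c\<in>UNIV. mu $ c * (\<Sum>b\<in>UNIV. v $ b * lhsT n r mu (A @ [c, b])))
     = (\<Sum>b\<in>UNIV. v $ b * lhsT n (Suc r) mu (A @ [b]))"
proof -
  have "(\<Sum>c\<in>UNIV. mu $ c * (\<Sum>b\<in>UNIV. v $ b * lhsT n r mu (A @ [c, b])))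
      = (\<Sum>c\<in>UNIV. \<Sum>b\<in>UNIV. v $ b * (mu $ c * lhsT n r mu (A @ [b, c])))"
    using lhsT_swap_last by (simp add: sum_distrib_left mult_ac)
  also have "\<dots> = (\<Sum>b\<in>UNIV. \<Sum>c\<in>UNIV. v $ b * (mu $ c * lhsT n r mu (A @ [b, c])))"
    by (rule sum.swap)
  finally show ?thesis
    by (simp add: lhsT_Suc sum_distrib_left)
qed

lemma has_derivative_lhsT:
  "((\<lambda>p. lhsT n r (snd p) A) has_derivative
     (\<lambda>h. real r * (\<Sum>b\<in>UNIV. snd h $ b * lhsT n (r - 1) (snd p) (A @ [b])))) (at p)"
proof (induction r arbitrary: A)
  case 0
  have lhsT_0_const: "(\<lambda>p. lhsT n 0 (snd p) A) = (\<lambda>p. lhsT n 0 0 A)"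
    by (simp add: lhsT_def)
  show ?case
    unfolding lhsT_0_const by simp
next
  case (Suc r)
  let ?D = "\<lambda>r B h. real r * (\<Sum>b\<in>UNIV. snd h $ b * lhsT n (r - 1) (snd p) (B @ [b]))"
  have coordinate: "((\<lambda>h. snd h $ c) has_derivative (\<lambda>h. snd h $ c)) (at p)" for c
    by (intro bounded_linear_imp_has_derivative
        bounded_linear_compose[OF bounded_linear_vec_nth bounded_linear_snd])
  have contract: "(\<Sum>c\<in>UNIV. snd p $ c * ?D r (A @ [c]) h)
      = real r * (\<Sum>b\<in>UNIV. snd h $ b * lhsT n r (snd p) (A @ [b]))" for h
  proof (cases r)
    case (Suc r')
    then have "(\<Sum>c\<in>UNIV. snd p $ c * ?D r (A @ [c]) h)
        = real r * (\<Sum>c\<in>UNIV. snd p $ c * (\<Sum>b\<in>UNIV. snd h $ b * lhsT n r' (snd p) (A @ [c, b])))"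
      by (simp add: sum_distrib_left mult.left_commute)
    then show ?thesis
      using sum_mu_sum_lhsT_append[of "snd p" "snd h" n r' A] Suc by simp
  qed simp
  show ?case
    unfolding lhsT_Suc
  proof (rule has_derivative_eq_rhs)
    show "((\<lambda>p. \<Sum>c\<in>UNIV. snd p $ c * lhsT n r (snd p) (A @ [c])) has_derivative
      (\<lambda>h. \<Sum>c\<in>UNIV. snd p $ c * ?D r (A @ [c]) h + snd h $ c * lhsT n r (snd p) (A @ [c]))) (at p)"
      by (intro has_derivative_sum has_derivative_mult coordinate Suc.IH)
    show "(\<lambda>h. \<Sum>c\<in>UNIV. snd p $ c * ?D r (A @ [c]) h + snd h $ c * lhsT n r (snd p) (A @ [c]))
      = ?D (Suc r) A"
      by (simp only: sum.distrib contract) (simp add: algebra_simps)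
  qed
qed

lemma dmu_lhsT: "dmu (\<lambda>lam mu A. lhsT n r mu A) lam mu A b = real r * lhsT n (r - 1) mu (A @ [b])"
proof -
  have "axis b 1 $ c * f c = (if c = b then f c else 0)" for c and f :: "4 \<Rightarrow> real"
    by (simp add: axis_def)
  then have "(\<Sum>c\<in>UNIV. axis b 1 $ c * f c) = f b" for f :: "4 \<Rightarrow> real"
    by simp
  then show ?thesis
    unfolding dmu_def frechet_derivative_at[OF has_derivative_lhsT, symmetric] by simp
qed

lemma tsym_dmu_lhsT:
  "tsym (Suc k) (\<lambda>xs. dmu (\<lambda>lam mu A. lhsT n r mu A) lam mu (butlast xs) (last xs))"
  unfolding tsym_def
proof (intro allI impI)
  fix xs :: "4 list" and p
  assume xs: "length xs = Suc k" and p: "p permutes {..<Suc k}"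
  let ?ys = "map (\<lambda>i. xs ! p i) [0..<Suc k]"
  have "?ys = permute_list p xs"
    using xs by (simp add: permute_list_def)
  then have "lhsT n (r - 1) mu ?ys = lhsT n (r - 1) mu xs"
    using lhsT_permute_list p xs by simp
  moreover have "xs \<noteq> []" "?ys \<noteq> []"
    using xs by auto
  ultimately show "dmu (\<lambda>lam mu A. lhsT n r mu A) lam mu (butlast ?ys) (last ?ys)
      = dmu (\<lambda>lam mu A. lhsT n r mu A) lam mu (butlast xs) (last xs)"
    by (simp add: dmu_lhsT)
qed

section \<open>Lorentz covariance\<close>

definition metric_matrix :: "real^4^4" where
  "metric_matrix = (\<chi> a b. gm a b)"

lemma metric_matrix_squared: "metric_matrix ** metric_matrix = mat 1"
proof -
  have "(\<Sum>k\<in>UNIV. gm a k * gm k b) = (if a = b then 1 else 0)" for a b :: 4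
  proof -
    have "(\<Sum>k\<in>UNIV. gm a k * gm k b) = (\<Sum>k\<in>UNIV. if k = a then gm a a * gm a b else 0)"
      by (intro sum.cong refl) (auto simp: gm_def)
    then show ?thesis
      by (auto simp: gm_def)
  qed
  then show ?thesis
    by (simp add: matrix_matrix_mult_def mat_def metric_matrix_def vec_eq_iff)
qed

lemma lorentz_iff_matrix: "lorentz L \<longleftrightarrow> transpose L ** metric_matrix ** L = metric_matrix"
proof -
  have "(transpose L ** metric_matrix ** L) $ c $ d = (\<Sum>b\<in>UNIV. \<Sum>a\<in>UNIV. gm a b * L $ a $ c * L $ b $ d)"
    for c d
    by (simp add: matrix_matrix_mult_def metric_matrix_def transpose_def sum_distrib_left
        sum_distrib_right mult_ac)
  moreover have "(\<Sum>b\<in>UNIV. \<Sum>a\<in>UNIV. gm a b * L $ a $ c * L $ b $ d)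
      = (\<Sum>a\<in>UNIV. \<Sum>b\<in>UNIV. gm a b * L $ a $ c * L $ b $ d)" for c d
    by (rule sum.swap)
  ultimately show ?thesis
    by (simp add: lorentz_def vec_eq_iff metric_matrix_def)
qed

text \<open>Since the metric is its own inverse, a Lorentz transformation also preserves the contravariant
  metric: \<open>L g L\<^sup>T = g\<close>.\<close>

lemma lorentz_preserves_contravariant_metric:
  assumes "lorentz L"
  shows "(\<Sum>c\<in>UNIV. \<Sum>d\<in>UNIV. L $ a $ c * L $ b $ d * gm c d) = gm a b"
proof -
  let ?G = metric_matrix
  have "(?G ** transpose L ** ?G) ** L = ?G ** (transpose L ** ?G ** L)"
    by (simp add: matrix_mul_assoc)
  also have "\<dots> = mat 1"
    using assms metric_matrix_squared by (simp add: lorentz_iff_matrix)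
  finally have "L ** (?G ** transpose L ** ?G) = mat 1"
    using matrix_left_right_inverse by blast
  then have "L ** ?G ** transpose L ** (?G ** ?G) = ?G"
    by (metis matrix_mul_assoc matrix_mul_lid)
  then have "L ** ?G ** transpose L = ?G"
    by (simp add: metric_matrix_squared)
  moreover have "(L ** ?G ** transpose L) $ a $ b = (\<Sum>d\<in>UNIV. \<Sum>c\<in>UNIV. L $ a $ c * L $ b $ d * gm c d)"
    by (simp add: matrix_matrix_mult_def metric_matrix_def transpose_def sum_distrib_left
        sum_distrib_right mult_ac)
  moreover have "\<dots> = (\<Sum>c\<in>UNIV. \<Sum>d\<in>UNIV. L $ a $ c * L $ b $ d * gm c d)"
    by (rule sum.swap)
  ultimately show ?thesis
    by (simp add: metric_matrix_def)
qed

definition lorentz_act :: "real^4^4 \<Rightarrow> nat \<Rightarrow> (4 list \<Rightarrow> real) \<Rightarrow> 4 list \<Rightarrow> real" where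
  "lorentz_act L k T A = (\<Sum>B\<in>{B::4 list. length B = k}. (\<Prod>i<k. L $ (A ! i) $ (B ! i)) * T B)"

lemma lorentz_act_gprod:
  assumes "lorentz L" "length A = 2 * m"
  shows "lorentz_act L (2 * m) (gprod m) A = gprod m A"
  using assms(2)
proof (induction m arbitrary: A)
  case 0
  then show ?case by (simp add: lorentz_act_def)
next
  case (Suc m)
  then obtain a b A' where A: "A = a # b # A'" and A': "length A' = 2 * m"
    using length_ge_2_Cons_Cons[of A] by auto
  have "lorentz_act L (2 * Suc m) (gprod (Suc m)) A
     = (\<Sum>c\<in>UNIV. \<Sum>d\<in>UNIV. \<Sum>B\<in>{B. length B = 2 * m}.
          (\<Prod>i<Suc (Suc (2 * m)). L $ (A ! i) $ ((c # d # B) ! i)) * gprod (Suc m) (c # d # B))"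
    unfolding lorentz_act_def by (simp add: sum_lists_length_Suc)
  also have "\<dots> = (\<Sum>c\<in>UNIV. \<Sum>d\<in>UNIV. \<Sum>B\<in>{B. length B = 2 * m}.
          L $ a $ c * L $ b $ d * gm c d * ((\<Prod>i<2 * m. L $ (A' ! i) $ (B ! i)) * gprod m B))"
    unfolding A prod.lessThan_Suc_shift gprod_Suc_Cons_Cons by (simp add: mult_ac)
  also have "\<dots> = (\<Sum>c\<in>UNIV. \<Sum>d\<in>UNIV. L $ a $ c * L $ b $ d * gm c d) * gprod m A'"
    using Suc.IH[OF A'] by (simp add: lorentz_act_def sum_distrib_left[symmetric] sum_distrib_right)
  also have "\<dots> = gprod (Suc m) A"
    using lorentz_preserves_contravariant_metric[OF assms(1)] by (simp add: A gprod_Suc_Cons_Cons)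
  finally show ?case .
qed

lemma lorentz_act_permute_list:
  assumes p: "p permutes {..<k}" and A: "length A = k"
  shows "lorentz_act L k (\<lambda>B. T (permute_list p B)) A = lorentz_act L k T (permute_list p A)"
  unfolding lorentz_act_def
proof (rule sum.reindex_bij_witness[where i="permute_list (inv p)" and j="permute_list p"])
  have inv_p: "inv p permutes {..<k}"
    using permutes_inv[OF p] .
  fix B :: "4 list" assume "B \<in> {B. length B = k}"
  then have B: "length B = k" by simp
  show "permute_list (inv p) (permute_list p B) = B"
    using B permute_list_compose[of "inv p" B p] inv_p permutes_inv_o(1)[OF p] by simp
  show "permute_list p (permute_list (inv p) B) = B"
    using B permute_list_compose[of p B "inv p"] p permutes_inv_o(2)[OF p] by simp
  show "permute_list p B \<in> {B. length B = k}" "permute_list (inv p) B \<in> {B. length B = k}"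
    using B by simp_all
  have "(\<Prod>i<k. L $ (permute_list p A ! i) $ (permute_list p B ! i)) = (\<Prod>i<k. L $ (A ! p i) $ (B ! p i))"
    using A B p by (intro prod.cong refl) (simp add: permute_list_nth)
  also have "\<dots> = (\<Prod>i<k. L $ (A ! i) $ (B ! i))"
    using prod.permute[OF p, of "\<lambda>i. L $ (A ! i) $ (B ! i)"] by (simp add: o_def)
  finally show "(\<Prod>i<k. L $ (permute_list p A ! i) $ (permute_list p B ! i)) * T (permute_list p B)
      = (\<Prod>i<k. L $ (A ! i) $ (B ! i)) * T (permute_list p B)"
    by simp
qed

lemma lorentz_act_symm:
  assumes "length A = k"
  shows "lorentz_act L k (symm T) A = symm (lorentz_act L k T) A"
proof -
  let ?P = "{p. p permutes {..<k}}"
  have "lorentz_act L k (symm T) A = (\<Sum>B\<in>{B::4 list. length B = k}.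
      (\<Prod>i<k. L $ (A ! i) $ (B ! i)) * ((\<Sum>p\<in>?P. T (permute_list p B)) / fact k))"
    unfolding lorentz_act_def by (intro sum.cong refl) (simp add: symm_permute_list)
  also have "\<dots> = (\<Sum>p\<in>?P. lorentz_act L k (\<lambda>B. T (permute_list p B)) A) / fact k"
    unfolding lorentz_act_def
    by (simp add: sum_distrib_left sum_divide_distrib[symmetric] sum.swap[of _ "{B::4 list. length B = k}"])
  also have "\<dots> = (\<Sum>p\<in>?P. lorentz_act L k T (permute_list p A)) / fact k"
    using assms by (simp add: lorentz_act_permute_list)
  also have "\<dots> = symm (lorentz_act L k T) A"
    using assms by (simp add: symm_permute_list)
  finally show ?thesis .
qed

lemma lorentz_act_symm_gprod:
  assumes "lorentz L" "even n" "length A = n"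
  shows "lorentz_act L n (symm (gprod (n div 2))) A = symm (gprod (n div 2)) A"
proof -
  have "lorentz_act L n (symm (gprod (n div 2))) A = symm (lorentz_act L n (gprod (n div 2))) A"
    using assms(3) by (rule lorentz_act_symm)
  also have "\<dots> = symm (gprod (n div 2)) A"
    using assms lorentz_act_gprod[OF assms(1), where m="n div 2"] by (intro symm_cong) simp
  finally show ?thesis .
qed

lemma lorentz_act_append:
  assumes "length A = k" "length D = r"
  shows "lorentz_act L (k + r) T (A @ D)
    = (\<Sum>B\<in>{B::4 list. length B = k}. \<Sum>C\<in>{C::4 list. length C = r}.
        (\<Prod>i<k. L $ (A ! i) $ (B ! i)) * (\<Prod>j<r. L $ (D ! j) $ (C ! j)) * T (B @ C))"
  unfolding lorentz_act_def sum_lists_length_add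
  using assms by (intro sum.cong refl) (simp add: prod_lessThan_add nth_append)

lemma prod_cov_act:
  "(\<Prod>j<r. cov_act mu L $ (C ! j))
    = (\<Sum>D\<in>{D::4 list. length D = r}. (\<Prod>j<r. mu $ (D ! j)) * (\<Prod>j<r. L $ (D ! j) $ (C ! j)))"
proof -
  have "(\<Prod>j<r. cov_act mu L $ (C ! j)) = (\<Prod>j<r. \<Sum>a\<in>UNIV. mu $ a * L $ a $ (C ! j))"
    by (simp add: cov_act_def)
  also have "\<dots> = (\<Sum>D\<in>{D::4 list. length D = r}. \<Prod>j<r. mu $ (D ! j) * L $ (D ! j) $ (C ! j))"
    by (rule prod_sum_lists_length)
  finally show ?thesis
    by (simp add: prod.distrib)
qed

lemma lhsT_lorentz_covariant:
  assumes L: "lorentz L" and n: "even n" and r: "r \<le> n" and A: "length A = n - r"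
  shows "lhsT n r mu A = lorentz_act L (n - r) (lhsT n r (cov_act mu L)) A"
proof -
  define k where "k = n - r"
  let ?S = "symm (gprod (n div 2))"
  let ?LA = "\<lambda>B. \<Prod>i<k. L $ (A ! i) $ (B ! i)"
  let ?LD = "\<lambda>D C. \<Prod>j<r. L $ (D ! j) $ (C ! j)"
  let ?mu = "\<lambda>D. \<Prod>j<r. mu $ (D ! j)"
  let ?lists = "\<lambda>k. {B::4 list. length B = k}"
  have nk: "n = k + r" and Ak: "length A = k"
    using r A by (simp_all add: k_def)
  have "lhsT n r mu A = (\<Sum>D\<in>?lists r. lorentz_act L (k + r) ?S (A @ D) * ?mu D)"
    unfolding lhsT_def using lorentz_act_symm_gprod[OF L n] Ak nk by (intro sum.cong refl) simp
  also have "\<dots> = (\<Sum>D\<in>?lists r. \<Sum>B\<in>?lists k. \<Sum>C\<in>?lists r. ?LA B * (?S (B @ C) * (?mu D * ?LD D C)))"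
    using Ak by (intro sum.cong refl) (simp add: lorentz_act_append sum_distrib_left sum_distrib_right mult_ac)
  also have "\<dots> = (\<Sum>B\<in>?lists k. \<Sum>D\<in>?lists r. \<Sum>C\<in>?lists r. ?LA B * (?S (B @ C) * (?mu D * ?LD D C)))"
    by (rule sum.swap)
  also have "\<dots> = (\<Sum>B\<in>?lists k. \<Sum>C\<in>?lists r. \<Sum>D\<in>?lists r. ?LA B * (?S (B @ C) * (?mu D * ?LD D C)))"
    by (intro sum.cong refl sum.swap)
  also have "\<dots> = (\<Sum>B\<in>?lists k. ?LA B * lhsT n r (cov_act mu L) B)"
    by (simp add: lhsT_def prod_cov_act sum_distrib_left)
  finally show ?thesis
    by (simp add: lorentz_act_def k_def)
qed

theorem proposition8:
  fixes n r :: nat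
  assumes "even n" and "r \<le> n"
  shows "in_F (n - r) (\<lambda>lam mu A. lhsT n r mu A)
    \<and> (\<forall>mu A. timelike mu \<longrightarrow> length A = n - r \<longrightarrow>
         lhsT n r mu A =
           (\<Sum>s = 0..(n - r) div 2. phicoef n r s (gam mu) * symm (gmuT s mu) A))"
proof
  have "covariant (n - r) (\<lambda>lam mu A. lhsT n r mu A)"
    using lhsT_lorentz_covariant[OF _ assms] by (simp add: covariant_def lorentz_act_def)
  then show "in_F (n - r) (\<lambda>lam mu A. lhsT n r mu A)"
    unfolding in_F_def
    by (simp add: smooth_on_real_polynomial_function real_polynomial_function_lhsT tsym_lhsT tsym_dmu_lhsT)
  show "\<forall>mu A. timelike mu \<longrightarrow> length A = n - r \<longrightarrow>
      lhsT n r mu A = (\<Sum>s = 0..(n - r) div 2. phicoef n r s (gam mu) * symm (gmuT s mu) A)"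
    using lhsT_eq_phicoef_expansion[OF assms] by blast
qed

end
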